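(* Let $P,R\in C^1(\mathbb{R},\mathrm{Sym}(n,\mathbb{R}))$, $Q\in C^1(\mathbb{R},\mathrm{Mat}(n,\mathbb{R}))$ satisfy (F2) with constants $C_1,C_2,C_3$. For $\lambda\in\mathbb{R}$ let $B_\lambda(t)=\begin{bmatrix}P^{-1}&-P^{-1}Q\\-Q^TP^{-1}&Q^TP^{-1}Q-R-\lambda I_n\end{bmatrix}(t)$, let $\gamma_{(\tau,\lambda)}$ be the solution of $\dot\gamma=JB_\lambda(t)\gamma$, $\gamma(\tau)=I_{2n}$, and set $E^s_\lambda(\tau)=\{v\in\mathbb{R}^{2n}:\lim_{t\to+\infty}\gamma_{(\tau,\lambda)}(t)v=0\}$, $E^u_\lambda(\tau)=\{v\in\mathbb{R}^{2n}:\lim_{t\to-\infty}\gamma_{(\tau,\lambda)}(t)v=0\}$. Then $E^u_\lambda(-\tau)\cap E^s_\lambda(\tau)=\{0\}$ for all $\tau\ge0$ and all $\lambda\ge\frac{2C_2^2}{C_1}+C_3$.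
   Context: (F2): the limits of $P,Q,R$ as $t\to\pm\infty$ exist and $\langle P(t)v,v\rangle\ge C_1|v|^2$, $|P(t)v|\ge C_1|v|$, $|Q(t)v|\le C_2|v|$, $|R(t)v|\le C_3|v|$ for all $t,v$. $J=\begin{bmatrix}0&-I_n\\ I_n&0\end{bmatrix}$. *)

theory Defs
  imports "HOL-Analysis.Analysis"
begin

text \<open>Block matrices: a 2n x 2n matrix indexed by the sum type 'n + 'n,
  the first summand giving the first block row/column.\<close>
definition blockmat ::
  "real^'n^'n \<Rightarrow> real^'n^'n \<Rightarrow> real^'n^'n \<Rightarrow> real^'n^'n \<Rightarrow> real^('n::finite + 'n)^('n + 'n)" where
  "blockmat A B C D = (\<chi> i j. case i of
      Inl a \<Rightarrow> (case j of Inl b \<Rightarrow> A $ a $ b | Inr b \<Rightarrow> B $ a $ b)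
    | Inr a \<Rightarrow> (case j of Inl b \<Rightarrow> C $ a $ b | Inr b \<Rightarrow> D $ a $ b))"

definition Jmat :: "real^('n::finite + 'n)^('n + 'n)" where
  "Jmat = blockmat 0 (- mat 1) (mat 1) 0"

definition Bmat ::
  "(real \<Rightarrow> real^'n^'n) \<Rightarrow> (real \<Rightarrow> real^'n^'n) \<Rightarrow> (real \<Rightarrow> real^'n^'n) \<Rightarrow> real \<Rightarrow> real
     \<Rightarrow> real^('n::finite + 'n)^('n + 'n)" where
  "Bmat P Q R lam t =
     blockmat (matrix_inv (P t)) (- (matrix_inv (P t) ** Q t))
              (- (transpose (Q t) ** matrix_inv (P t)))
              (transpose (Q t) ** matrix_inv (P t) ** Q t - R t - lam *\<^sub>R mat 1)"

end

theory Submission imports Defs begin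

text \<open>Write a solution of \<open>z' = J B\<^sub>\<lambda> z\<close> in blocks as \<open>z = (x, y)\<close> and let
  \<open>u = P\<^sup>-\<^sup>1 (x - Q y)\<close>, so that \<open>x = P u + Q y\<close>. The system reads \<open>y' = u\<close>,
  \<open>x' = Q\<^sup>T u + R y + \<lambda> y\<close>, hence the energy \<open>x \<bullet> y\<close> has derivative
  \<open>P u \<bullet> u + 2 Q y \<bullet> u + R y \<bullet> y + \<lambda> |y|\<^sup>2 \<ge> C\<^sub>1/2 |u|\<^sup>2\<close> as soon as
  \<open>\<lambda> \<ge> 2 C\<^sub>2\<^sup>2/C\<^sub>1 + C\<^sub>3\<close> (complete the square), so it is nondecreasing along every solution.
  For \<open>v\<close> in both spaces, the solution through \<open>v\<close> at \<open>\<tau>\<close> decays at \<open>+\<infinity>\<close>, so the energy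
  of \<open>v\<close> itself is \<open>\<le> 0\<close>. The solution through \<open>v\<close> at \<open>-\<tau>\<close> decays at \<open>-\<infinity>\<close>, so its
  energy is \<open>\<ge> 0\<close>; hence it vanishes on \<open>(-\<infinity>, -\<tau>]\<close>, where therefore \<open>u = 0\<close>, \<open>y\<close> is
  constant and thus \<open>0\<close>, and finally \<open>x = 0\<close>.\<close>

definition block_fst :: "real^('a::finite + 'b::finite) \<Rightarrow> real^'a" where
  "block_fst w = (\<chi> i. w $ Inl i)"

definition block_snd :: "real^('a::finite + 'b::finite) \<Rightarrow> real^'b" where
  "block_snd w = (\<chi> i. w $ Inr i)"

lemma block_vec_eq_0_iff: "w = 0 \<longleftrightarrow> block_fst w = 0 \<and> block_snd w = 0"
  by (auto simp: vec_eq_iff block_fst_def block_snd_def split: sum.splits) (metis sum.exhaust)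

lemma bounded_linear_block_fst: "bounded_linear block_fst"
  and bounded_linear_block_snd: "bounded_linear block_snd"
  by (auto intro!: linear_conv_bounded_linear[THEN iffD1] linearI
      simp: block_fst_def block_snd_def vec_eq_iff)

lemma block_fst_blockmat_mulv: "block_fst (blockmat A B C D *v w) = A *v block_fst w + B *v block_snd w"
  and block_snd_blockmat_mulv: "block_snd (blockmat A B C D *v w) = C *v block_fst w + D *v block_snd w"
  by (auto simp: vec_eq_iff blockmat_def block_fst_def block_snd_def matrix_vector_mult_def
      UNIV_Plus_UNIV[symmetric] sum.Plus simp del: UNIV_Plus_UNIV)

lemma matrix_vector_mult_uminus_left: "(- A) *v x = - (A *v (x::real^'n::finite))"
  by (simp add: vec_eq_iff matrix_vector_mult_def sum_negf)

lemma block_fst_Jmat_mulv: "block_fst (Jmat *v w) = - block_snd w"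
  and block_snd_Jmat_mulv: "block_snd (Jmat *v w) = block_fst w"
  by (simp_all add: Jmat_def block_fst_blockmat_mulv block_snd_blockmat_mulv
      matrix_vector_mult_uminus_left)

lemma matrix_mul_matrix_inv: "invertible A \<Longrightarrow> A ** matrix_inv A = mat 1"
  unfolding invertible_def matrix_inv_def by (rule someI2_ex) simp_all

lemma invertible_if_bounded_below:
  fixes A :: "real^'n::finite^'n"
  assumes "c > 0" and "\<And>v. c * norm v \<le> norm (A *v v)"
  shows "invertible A"
proof -
  have "inj ((*v) A)"
  proof (rule linear_injective_0[THEN iffD2, OF matrix_vector_mul_linear], intro allI impI)
    fix v assume "A *v v = 0"
    then have "c * norm v \<le> 0"
      using assms(2)[of v] by simp
    then show "v = 0"
      using assms(1) by (simp add: mult_le_0_iff)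
  qed
  then show ?thesis
    using matrix_left_invertible_injective invertible_left_inverse by blast
qed

lemma has_vector_derivative_matrix_vector_mult:
  fixes \<Phi> :: "real \<Rightarrow> real^'n::finite^'m::finite"
  assumes "(\<Phi> has_vector_derivative A ** \<Phi> t) (at t)"
  shows "((\<lambda>s. \<Phi> s *v v) has_vector_derivative A *v (\<Phi> t *v v)) (at t)"
proof -
  have "bounded_linear (\<lambda>M::real^'n^'m. M *v v)"
    by (auto intro!: linear_conv_bounded_linear[THEN iffD1] linearI
        simp: matrix_vector_mult_add_rdistrib scaleR_matrix_vector_assoc)
  from bounded_linear.has_vector_derivative[OF this assms] show ?thesis
    by (simp add: matrix_vector_mul_assoc)
qed

locale coercive_energy =
  fixes x y y' :: "real \<Rightarrow> 'a::real_inner" and c :: real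
  assumes has_vector_derivative_y: "\<And>t. (y has_vector_derivative y' t) (at t)"
    and energy_deriv_ge: "\<And>t. \<exists>D. ((\<lambda>s. x s \<bullet> y s) has_real_derivative D) (at t) \<and> c * (norm (y' t))\<^sup>2 \<le> D"
    and c_pos: "c > 0"
begin

lemma energy_mono: "s \<le> t \<Longrightarrow> x s \<bullet> y s \<le> x t \<bullet> y t"
proof (rule DERIV_nonneg_imp_nondecreasing[where f = "\<lambda>s. x s \<bullet> y s"])
  fix r
  obtain D where "((\<lambda>s. x s \<bullet> y s) has_real_derivative D) (at r)" "c * (norm (y' r))\<^sup>2 \<le> D"
    using energy_deriv_ge by blast
  moreover have "0 \<le> c * (norm (y' r))\<^sup>2"
    using c_pos by simp
  ultimately show "\<exists>D. ((\<lambda>s. x s \<bullet> y s) has_real_derivative D) (at r) \<and> 0 \<le> D"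
    by auto
qed

lemma energy_nonpos_if_tendsto_0_at_top:
  assumes "(x \<longlongrightarrow> 0) at_top" and "(y \<longlongrightarrow> 0) at_top"
  shows "x t \<bullet> y t \<le> 0"
proof (rule tendsto_lowerbound[OF bounded_bilinear.tendsto_zero[OF bounded_bilinear_inner assms]])
  show "\<forall>\<^sub>F s in at_top. x t \<bullet> y t \<le> x s \<bullet> y s"
    using eventually_ge_at_top[of t] by eventually_elim (rule energy_mono)
qed simp

lemma energy_nonneg_if_tendsto_0_at_bot:
  assumes "(x \<longlongrightarrow> 0) at_bot" and "(y \<longlongrightarrow> 0) at_bot"
  shows "0 \<le> x t \<bullet> y t"
proof (rule tendsto_upperbound[OF bounded_bilinear.tendsto_zero[OF bounded_bilinear_inner assms]])
  show "\<forall>\<^sub>F s in at_bot. x s \<bullet> y s \<le> x t \<bullet> y t"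
    using eventually_le_at_bot[of t] by eventually_elim (rule energy_mono)
qed simp

lemma vanishes_if_energy_nonpos:
  assumes x_lim: "(x \<longlongrightarrow> 0) at_bot" and y_lim: "(y \<longlongrightarrow> 0) at_bot"
    and energy_nonpos: "x t0 \<bullet> y t0 \<le> 0"
  shows "y t0 = 0" and "y' t0 = 0"
proof -
  note energy_nonneg = energy_nonneg_if_tendsto_0_at_bot[OF x_lim y_lim]
  have energy_0: "x s \<bullet> y s = 0" if "s \<le> t0" for s
    using energy_mono[OF that] energy_nonneg[of s] energy_nonpos by linarith
  have y'_0: "y' s = 0" if "s \<le> t0" for s
  proof -
    obtain D where D: "((\<lambda>s. x s \<bullet> y s) has_real_derivative D) (at s)" "c * (norm (y' s))\<^sup>2 \<le> D"
      using energy_deriv_ge by blast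
    have "D = 0"
      using energy_0[OF that] energy_nonneg by (intro DERIV_local_min[OF D(1), of 1]) auto
    then show "y' s = 0"
      using D(2) c_pos by (simp add: mult_le_0_iff)
  qed
  have "(y has_vector_derivative 0) (at s within {..t0})" if "s \<in> {..t0}" for s
    using has_vector_derivative_y[of s] y'_0[of s] that by (auto intro: has_vector_derivative_at_within)
  then obtain k where k: "\<And>s. s \<in> {..t0} \<Longrightarrow> y s = k"
    using has_vector_derivative_zero_constant[of "{..t0}" y] by blast
  have "(y \<longlongrightarrow> k) at_bot"
    using eventually_le_at_bot[of t0] by (rule tendsto_eventually[OF eventually_mono]) (simp add: k)
  then have "k = 0"
    using y_lim tendsto_unique[OF trivial_limit_at_bot_linorder] by blast
  then show "y t0 = 0" and "y' t0 = 0"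
    using k[of t0] y'_0[of t0] by simp_all
qed

end

definition legendre_velocity :: "real^'n^'n \<Rightarrow> real^'n^'n \<Rightarrow> real^('n::finite + 'n) \<Rightarrow> real^'n" where
  "legendre_velocity P Q w = matrix_inv P *v (block_fst w - Q *v block_snd w)"

lemma block_fst_eq_legendre_velocity:
  "P ** matrix_inv P = mat 1 \<Longrightarrow> block_fst w = P *v legendre_velocity P Q w + Q *v block_snd w"
  by (simp add: legendre_velocity_def matrix_vector_mul_assoc)

lemma Jmat_Bmat_mulv:
  fixes P Q R :: "real \<Rightarrow> real^'n::finite^'n" and t lam :: real and w :: "real^('n + 'n)"
  defines "u \<equiv> legendre_velocity (P t) (Q t) w"
  shows "block_fst (Jmat *v (Bmat P Q R lam t *v w))
           = transpose (Q t) *v u + R t *v block_snd w + lam *\<^sub>R block_snd w"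
    and "block_snd (Jmat *v (Bmat P Q R lam t *v w)) = u"
  unfolding block_fst_Jmat_mulv block_snd_Jmat_mulv Bmat_def block_fst_blockmat_mulv
    block_snd_blockmat_mulv u_def legendre_velocity_def
  by (simp_all add: matrix_vector_mult_uminus_left scaleR_matrix_vector_assoc[symmetric]
      matrix_vector_mul_assoc[symmetric] algebra_simps del: transpose_matrix_vector)

lemma legendre_energy_rate_ge:
  fixes P Q R :: "real^'n::finite^'n"
  assumes P_coercive: "C1 * (norm u)\<^sup>2 \<le> (P *v u) \<bullet> u"
    and Q_bound: "norm (Q *v y) \<le> C2 * norm y"
    and R_bound: "norm (R *v y) \<le> C3 * norm y"
    and C1_pos: "C1 > 0" and lam: "2 * C2\<^sup>2 / C1 + C3 \<le> lam"
  shows "C1 / 2 * (norm u)\<^sup>2 \<le> (transpose Q *v u + R *v y + lam *\<^sub>R y) \<bullet> y + (P *v u + Q *v y) \<bullet> u"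
proof -
  have rate_eq: "(transpose Q *v u + R *v y + lam *\<^sub>R y) \<bullet> y + (P *v u + Q *v y) \<bullet> u
      = (P *v u) \<bullet> u + 2 * ((Q *v y) \<bullet> u) + (R *v y) \<bullet> y + lam * (norm y)\<^sup>2"
    using dot_lmul_matrix[of u Q y] inner_commute[of "Q *v y" u]
    by (simp add: inner_add_left power2_norm_eq_inner)
  have "- (C2 * norm y * norm u) \<le> (Q *v y) \<bullet> u"
    using Cauchy_Schwarz_ineq2[of "Q *v y" u] mult_right_mono[OF Q_bound norm_ge_zero, of u] by linarith
  moreover have "- (C3 * (norm y)\<^sup>2) \<le> (R *v y) \<bullet> y"
    using Cauchy_Schwarz_ineq2[of "R *v y" y] mult_right_mono[OF R_bound norm_ge_zero, of y]
    by (simp add: power2_eq_square)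
  moreover have "(2 * C2\<^sup>2 / C1 + C3) * (norm y)\<^sup>2 \<le> lam * (norm y)\<^sup>2"
    using lam by (simp add: mult_right_mono)
  moreover have "0 \<le> (C1 * norm u - 2 * C2 * norm y)\<^sup>2 / (2 * C1)"
    using C1_pos by simp
  moreover have "(C1 * norm u - 2 * C2 * norm y)\<^sup>2 / (2 * C1)
      = C1 / 2 * (norm u)\<^sup>2 - 2 * C2 * norm u * norm y + 2 * C2\<^sup>2 / C1 * (norm y)\<^sup>2"
    using C1_pos by (simp add: field_simps power2_eq_square)
  ultimately show ?thesis
    unfolding rate_eq using P_coercive by (simp add: algebra_simps)
qed

lemma coercive_energy_hamiltonian:
  fixes P Q R :: "real \<Rightarrow> real^'n::finite^'n" and z :: "real \<Rightarrow> real^('n + 'n)"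
  assumes P_inv: "\<And>t. P t ** matrix_inv (P t) = mat 1"
    and P_coercive: "\<And>t v. C1 * (norm v)\<^sup>2 \<le> (P t *v v) \<bullet> v"
    and Q_bound: "\<And>t v. norm (Q t *v v) \<le> C2 * norm v"
    and R_bound: "\<And>t v. norm (R t *v v) \<le> C3 * norm v"
    and C1_pos: "C1 > 0" and lam: "2 * C2\<^sup>2 / C1 + C3 \<le> lam"
    and z_ode: "\<And>t. (z has_vector_derivative Jmat *v (Bmat P Q R lam t *v z t)) (at t)"
  shows "coercive_energy (\<lambda>t. block_fst (z t)) (\<lambda>t. block_snd (z t))
           (\<lambda>t. legendre_velocity (P t) (Q t) (z t)) (C1 / 2)"
proof
  fix t
  let ?x = "block_fst (z t)" and ?y = "block_snd (z t)" and ?u = "legendre_velocity (P t) (Q t) (z t)"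
  let ?x' = "transpose (Q t) *v ?u + R t *v ?y + lam *\<^sub>R ?y"
  show y_deriv: "((\<lambda>t. block_snd (z t)) has_vector_derivative ?u) (at t)"
    using bounded_linear.has_vector_derivative[OF bounded_linear_block_snd z_ode]
    by (simp add: Jmat_Bmat_mulv)
  have x_deriv: "((\<lambda>t. block_fst (z t)) has_vector_derivative ?x') (at t)"
    using bounded_linear.has_vector_derivative[OF bounded_linear_block_fst z_ode]
    by (simp add: Jmat_Bmat_mulv del: transpose_matrix_vector)
  have "((\<lambda>s. block_fst (z s) \<bullet> block_snd (z s)) has_real_derivative ?x \<bullet> ?u + ?x' \<bullet> ?y) (at t)"
    using bounded_bilinear.has_vector_derivative[OF bounded_bilinear_inner x_deriv y_deriv]
    by (simp add: has_real_derivative_iff_has_vector_derivative inner_commute del: transpose_matrix_vector)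
  moreover have "C1 / 2 * (norm ?u)\<^sup>2 \<le> ?x \<bullet> ?u + ?x' \<bullet> ?y"
  proof -
    have "C1 / 2 * (norm ?u)\<^sup>2 \<le> ?x' \<bullet> ?y + (P t *v ?u + Q t *v ?y) \<bullet> ?u"
      by (rule legendre_energy_rate_ge[OF P_coercive Q_bound R_bound C1_pos lam])
    moreover have "?x = P t *v ?u + Q t *v ?y"
      by (rule block_fst_eq_legendre_velocity[OF P_inv])
    ultimately show ?thesis
      by (simp add: inner_commute)
  qed
  ultimately show "\<exists>D. ((\<lambda>s. block_fst (z s) \<bullet> block_snd (z s)) has_real_derivative D) (at t)
      \<and> C1 / 2 * (norm ?u)\<^sup>2 \<le> D"
    by blast
qed (use C1_pos in simp)

theorem lemma3p8:
  fixes P Q R :: "real \<Rightarrow> real^'n::finite^'n"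
    and C1 C2 C3 :: real
    and gamma :: "real \<Rightarrow> real \<Rightarrow> real \<Rightarrow> real^('n + 'n)^('n + 'n)"
  assumes P_C1: "P C1_differentiable_on UNIV"
    and Q_C1: "Q C1_differentiable_on UNIV"
    and R_C1: "R C1_differentiable_on UNIV"
    and P_sym: "\<And>t. transpose (P t) = P t"
    and R_sym: "\<And>t. transpose (R t) = R t"
    and P_lim: "(\<exists>L. (P \<longlongrightarrow> L) at_top) \<and> (\<exists>L. (P \<longlongrightarrow> L) at_bot)"
    and Q_lim: "(\<exists>L. (Q \<longlongrightarrow> L) at_top) \<and> (\<exists>L. (Q \<longlongrightarrow> L) at_bot)"
    and R_lim: "(\<exists>L. (R \<longlongrightarrow> L) at_top) \<and> (\<exists>L. (R \<longlongrightarrow> L) at_bot)"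
    and C1_pos: "C1 > 0"
    and P_coercive: "\<And>t v. (P t *v v) \<bullet> v \<ge> C1 * (norm v)\<^sup>2"
    and P_below: "\<And>t v. norm (P t *v v) \<ge> C1 * norm v"
    and Q_bound: "\<And>t v. norm (Q t *v v) \<le> C2 * norm v"
    and R_bound: "\<And>t v. norm (R t *v v) \<le> C3 * norm v"
    and gamma_ode: "\<And>tau lam t. (gamma tau lam has_vector_derivative
                        (Jmat ** Bmat P Q R lam t ** gamma tau lam t)) (at t)"
    and gamma_init: "\<And>tau lam. gamma tau lam tau = mat 1"
  shows "\<forall>tau \<ge> 0. \<forall>lam \<ge> 2 * C2\<^sup>2 / C1 + C3.
           {v. ((\<lambda>t. gamma (- tau) lam t *v v) \<longlongrightarrow> 0) at_bot}
           \<inter> {v. ((\<lambda>t. gamma tau lam t *v v) \<longlongrightarrow> 0) at_top} = {0}"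
proof (intro allI impI)
  fix tau lam :: real
  assume lam: "lam \<ge> 2 * C2\<^sup>2 / C1 + C3"
  have P_inv: "P t ** matrix_inv (P t) = mat 1" for t
    using invertible_if_bounded_below[OF C1_pos P_below] by (rule matrix_mul_matrix_inv)
  have "((\<lambda>t. gamma a lam t *v v) has_vector_derivative
      Jmat *v (Bmat P Q R lam t *v (gamma a lam t *v v))) (at t)" for a v t
    using has_vector_derivative_matrix_vector_mult[OF gamma_ode]
    by (simp add: matrix_vector_mul_assoc matrix_mul_assoc)
  then have energy: "coercive_energy (\<lambda>t. block_fst (gamma a lam t *v v))
      (\<lambda>t. block_snd (gamma a lam t *v v)) (\<lambda>t. legendre_velocity (P t) (Q t) (gamma a lam t *v v)) (C1 / 2)" for a v
    by (rule coercive_energy_hamiltonian[OF P_inv P_coercive Q_bound R_bound C1_pos lam])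
  have "v = 0" if unstable: "((\<lambda>t. gamma (- tau) lam t *v v) \<longlongrightarrow> 0) at_bot"
    and stable: "((\<lambda>t. gamma tau lam t *v v) \<longlongrightarrow> 0) at_top" for v
  proof -
    note block_lim = bounded_linear.tendsto_zero[OF bounded_linear_block_fst]
      bounded_linear.tendsto_zero[OF bounded_linear_block_snd]
    have "block_fst v \<bullet> block_snd v \<le> 0"
      using coercive_energy.energy_nonpos_if_tendsto_0_at_top[OF energy block_lim[OF stable], of tau]
      by (simp add: gamma_init)
    then have "block_snd v = 0" and "legendre_velocity (P (- tau)) (Q (- tau)) v = 0"
      using coercive_energy.vanishes_if_energy_nonpos[OF energy block_lim[OF unstable], of "- tau"]
      by (simp_all add: gamma_init)
    moreover have "block_fst v
        = P (- tau) *v legendre_velocity (P (- tau)) (Q (- tau)) v + Q (- tau) *v block_snd v"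
      by (rule block_fst_eq_legendre_velocity[OF P_inv])
    ultimately show "v = 0"
      by (simp add: block_vec_eq_0_iff)
  qed
  then show "{v. ((\<lambda>t. gamma (- tau) lam t *v v) \<longlongrightarrow> 0) at_bot}
      \<inter> {v. ((\<lambda>t. gamma tau lam t *v v) \<longlongrightarrow> 0) at_top} = {0}"
    by auto
qed

end
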